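(* Let $i,n$ be natural numbers and let $(A,+,\circ)$ be a brace of cardinality $p^n$, where $p$ is a prime with $p>n+1$. Then $p^iA=\{p^ia: a\in A\}$ is an ideal of $A$. Moreover $A^{\circ p^i}=p^iA$, where $A^{\circ p^i}$ is the subgroup of $(A,\circ)$ generated by the elements $a^{\circ p^i}=a\circ a\circ\cdots\circ a$ ($p^i$ factors), $a\in A$.
   Context: A (left) brace is a set $A$ with binary operations $+,\circ$ such that $(A,+)$ is an abelian group, $(A,\circ)$ is a group, and $a\circ(b+c)+a=a\circ b+a\circ c$ for all $a,b,c$. Write $a*b=a\circ b-a-b$. An ideal of a brace $A$ is a subgroup $I$ of $(A,+)$ which is a normal subgroup of $(A,\circ)$ and satisfies $a*x\in I$ for all $a\in A$, $x\in I$; equivalently, an additive subgroup $I$ with $A*I\subseteq I$ and $I*A\subseteq I$. $p^ia$ denotes the $p^i$-fold additive multiple of $a$. *)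

theory Defs
  imports "HOL-Algebra.Algebra"
begin

text \<open>A (left) brace: additive structure S (abelian group) and multiplicative
  structure T (group, operation circ) on the same carrier, with the brace law
  a circ (b + c) + a = a circ b + a circ c.\<close>
definition brace :: "'a monoid \<Rightarrow> 'a monoid \<Rightarrow> bool" where
  "brace S T \<longleftrightarrow> comm_group S \<and> group T \<and> carrier T = carrier S \<and>
     (\<forall>a\<in>carrier S. \<forall>b\<in>carrier S. \<forall>c\<in>carrier S.
        (a \<otimes>\<^bsub>T\<^esub> (b \<otimes>\<^bsub>S\<^esub> c)) \<otimes>\<^bsub>S\<^esub> a
          = (a \<otimes>\<^bsub>T\<^esub> b) \<otimes>\<^bsub>S\<^esub> (a \<otimes>\<^bsub>T\<^esub> c))"

definition brace_star :: "'a monoid \<Rightarrow> 'a monoid \<Rightarrow> 'a \<Rightarrow> 'a \<Rightarrow> 'a" where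
  "brace_star S T a b = ((a \<otimes>\<^bsub>T\<^esub> b) \<otimes>\<^bsub>S\<^esub> inv\<^bsub>S\<^esub> a) \<otimes>\<^bsub>S\<^esub> inv\<^bsub>S\<^esub> b"

definition brace_ideal :: "'a monoid \<Rightarrow> 'a monoid \<Rightarrow> 'a set \<Rightarrow> bool" where
  "brace_ideal S T I \<longleftrightarrow> subgroup I S \<and> I \<lhd> T \<and>
     (\<forall>a\<in>carrier S. \<forall>x\<in>I. brace_star S T a x \<in> I)"

end

theory Submission
  imports Defs
begin

text \<open>The group (A,\<circ>) acts on (A,+) by the automorphisms \<open>\<lambda>_a(x) = a \<circ> x - a\<close>, and
  \<open>a * x = \<lambda>_a(x) - x\<close>. Put \<open>F_0 = 0\<close> and \<open>F_(j+1) = {x. A * x \<subseteq> F_j}\<close>. These are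
  \<open>\<lambda>\<close>-invariant additive subgroups, and since (A,\<circ>) is a p-group, counting fixed points of its
  action on \<open>A/F_j\<close> shows that \<open>F_j\<close> grows strictly until it reaches A; hence \<open>F_n = A\<close>.
  For \<open>a \<in> F_(j+1)\<close> the \<open>\<circ>\<close>-powers expand binomially,
  \<open>a^\<circ>m = \<Sum>_k (m choose k+1) (a*)^k a\<close>, and if \<open>j + 1 < p\<close> every coefficient
  \<open>(p^i choose k+1)\<close> with \<open>k \<ge> 1\<close> is divisible by \<open>p^i\<close>, so \<open>a^\<circ>(p^i) \<in> p^i a + p^i F_j\<close>.
  This puts the generators of \<open>A^\<circ>(p^i)\<close> into \<open>p^i A\<close>, which is a \<open>\<circ>\<close>-subgroup because it is
  \<open>\<lambda>\<close>-invariant; conversely \<open>p^i F_j \<subseteq> A^\<circ>(p^i)\<close> by induction on j. Normality holds because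
  the generating set is conjugation invariant, and \<open>A * p^i A \<subseteq> p^i A\<close> because each \<open>a * -\<close>
  is additive.\<close>

lemma group_action_restrictI:
  assumes "group G"
    and closed: "\<And>g x. g \<in> carrier G \<Longrightarrow> x \<in> E \<Longrightarrow> f g x \<in> E"
    and one: "\<And>x. x \<in> E \<Longrightarrow> f \<one>\<^bsub>G\<^esub> x = x"
    and mult: "\<And>g h x. g \<in> carrier G \<Longrightarrow> h \<in> carrier G \<Longrightarrow> x \<in> E \<Longrightarrow>
                 f (g \<otimes>\<^bsub>G\<^esub> h) x = f g (f h x)"
  shows "group_action G E (\<lambda>g. restrict (f g) E)"
proof -
  interpret G: group G by fact
  have bij: "restrict (f g) E \<in> Bij E" if g: "g \<in> carrier G" for g
  proof -
    have "f (inv\<^bsub>G\<^esub> g) (f g x) = x" "f g (f (inv\<^bsub>G\<^esub> g) x) = x" if "x \<in> E" for x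
      using g that by (simp_all flip: mult add: one)
    then have "bij_betw (f g) E E"
      using g closed by (intro bij_betw_byWitness[where f' = "f (inv\<^bsub>G\<^esub> g)"]) auto
    then show ?thesis
      unfolding Bij_def by (simp add: bij_betw_restrict_eq)
  qed
  have "(\<lambda>g. restrict (f g) E) \<in> hom G (BijGroup E)"
  proof (rule homI)
    fix g h assume "g \<in> carrier G" "h \<in> carrier G"
    then show "restrict (f (g \<otimes>\<^bsub>G\<^esub> h)) E
        = restrict (f g) E \<otimes>\<^bsub>BijGroup E\<^esub> restrict (f h) E"
      using bij closed by (auto simp: BijGroup_def compose_def mult)
  qed (simp add: BijGroup_def bij)
  then show ?thesis
    unfolding group_action_def group_hom_def group_hom_axioms_def
    using G.is_group group_BijGroup by blast
qed

lemma (in group_action) fixed_point_prime_power_order: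
  assumes "finite E" and p: "Factorial_Ring.prime (p::nat)" and "order G = p ^ n" and "p dvd card E"
    and "x0 \<in> E" and fixed: "\<forall>g\<in>carrier G. \<phi> g x0 = x0"
  shows "\<exists>x\<in>E. x \<noteq> x0 \<and> (\<forall>g\<in>carrier G. \<phi> g x = x)"
proof (rule ccontr)
  assume no_other: "\<not> ?thesis"
  have "orbit G \<phi> x0 = {x0}"
    using fixed orbit_refl[OF \<open>x0 \<in> E\<close>] unfolding orbit_def by auto
  then have x0_orbit: "{x0} \<in> orbits G E \<phi>"
    using \<open>x0 \<in> E\<close> unfolding orbits_def by blast
  have "finite (orbits G E \<phi>)"
    using orbits_coverture \<open>finite E\<close> finite_UnionD by metis
  have "p dvd card Q" if Q: "Q \<in> orbits G E \<phi> - {{x0}}" for Q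
  proof (rule ccontr)
    assume "\<not> p dvd card Q"
    obtain x where x: "x \<in> E" "Q = orbit G \<phi> x"
      using Q unfolding orbits_def by blast
    have "card Q dvd p ^ n"
      using orbit_stabilizer_theorem[OF x(1)] assms(3) x(2) by (metis dvd_triv_left)
    then obtain k where "card Q = p ^ k"
      using divides_primepow_nat[OF p] by blast
    with \<open>\<not> p dvd card Q\<close> have "card Q = 1"
      by (cases k) auto
    moreover have "x \<in> Q"
      using orbit_refl[OF x(1)] x(2) by simp
    ultimately have "Q = {x}"
      by (metis card_1_singletonE singletonD)
    then have "\<forall>g\<in>carrier G. \<phi> g x = x"
      using x(2) unfolding orbit_def by blast
    then have "x = x0"
      using no_other x(1) by blast
    then show False
      using Q \<open>Q = {x}\<close> by simp
  qed
  then have "p dvd (\<Sum>Q\<in>orbits G E \<phi> - {{x0}}. card Q)"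
    by (intro dvd_sum) auto
  moreover have "card E = 1 + (\<Sum>Q\<in>orbits G E \<phi> - {{x0}}. card Q)"
    using disjoint_sum[OF \<open>finite E\<close>, of "\<lambda>_. 1::nat"]
      sum.remove[OF \<open>finite (orbits G E \<phi>)\<close> x0_orbit, of card] by simp
  ultimately have "p dvd 1"
    using \<open>p dvd card E\<close> by (metis dvd_add_left_iff)
  then show False
    using p by simp
qed

lemma (in group) card_subgroup_prime_power:
  assumes "Factorial_Ring.prime (p::nat)" and "order G = p ^ n" and "subgroup H G"
  obtains k where "card H = p ^ k"
proof -
  have "card H dvd p ^ n"
    using lagrange[OF assms(3)] assms(2) by (metis dvd_triv_right)
  then show ?thesis
    using divides_primepow_nat[OF assms(1)] that by blast
qed

lemma (in group) mult_inv_cancel_left [simp]: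
  "x \<in> carrier G \<Longrightarrow> y \<in> carrier G \<Longrightarrow> x \<otimes> (inv x \<otimes> y) = y"
  by (simp flip: m_assoc)

lemma (in group) inv_mult_cancel_left [simp]:
  "x \<in> carrier G \<Longrightarrow> y \<in> carrier G \<Longrightarrow> inv x \<otimes> (x \<otimes> y) = y"
  by (simp flip: m_assoc)

lemma (in group) subgroup_nat_pow_closed:
  "subgroup H G \<Longrightarrow> x \<in> H \<Longrightarrow> x [^] (c::nat) \<in> H"
  by (induction c) (auto simp: subgroup.one_closed subgroup.m_closed subgroup.mem_carrier)

lemma (in group) conj_nat_pow:
  assumes "g \<in> carrier G" and "x \<in> carrier G"
  shows "g \<otimes> x [^] (m::nat) \<otimes> inv g = (g \<otimes> x \<otimes> inv g) [^] m"
proof (induction m)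
  case (Suc m)
  have "g \<otimes> x [^] Suc m \<otimes> inv g = (g \<otimes> x [^] m \<otimes> inv g) \<otimes> (g \<otimes> x \<otimes> inv g)"
    using assms by (simp add: m_assoc)
  then show ?case
    using Suc by simp
qed (use assms in simp)

lemma (in group) normal_generate_nat_pow_image:
  "generate G ((\<lambda>x. x [^] (q::nat)) ` carrier G) \<lhd> G"
proof (rule normal_generateI)
  fix h g assume "h \<in> (\<lambda>x. x [^] q) ` carrier G" and g: "g \<in> carrier G"
  then obtain x where x: "x \<in> carrier G" "h = x [^] q"
    by blast
  then have "g \<otimes> h \<otimes> inv g = (g \<otimes> x \<otimes> inv g) [^] q"
    using g by (simp add: conj_nat_pow)
  then show "g \<otimes> h \<otimes> inv g \<in> (\<lambda>x. x [^] q) ` carrier G"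
    using g x by auto
qed auto

lemma (in comm_group) nat_pow_group_hom: "group_hom G G (\<lambda>x. x [^] (q::nat))"
proof -
  have "(\<lambda>x. x [^] q) \<in> hom G G"
    by (rule homI) (simp_all add: nat_pow_distrib)
  then show ?thesis
    unfolding group_hom_def group_hom_axioms_def using is_group by blast
qed

lemma (in comm_group) nat_pow_image_subgroup:
  "subgroup H G \<Longrightarrow> subgroup ((\<lambda>x. x [^] (q::nat)) ` H) G"
  using group_hom.subgroup_img_is_subgroup[OF nat_pow_group_hom] .

lemma (in comm_group) finprod_subgroup_closed:
  assumes "subgroup H G" and "finite I" and "\<And>k. k \<in> I \<Longrightarrow> f k \<in> H"
  shows "finprod G f I \<in> H"
  using assms(2,3)
proof (induction I rule: finite_induct)
  case (insert k I)
  then have "f \<in> I \<rightarrow> carrier G" "f k \<in> carrier G"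
    using subgroup.mem_carrier[OF assms(1)] by auto
  then show ?case
    using insert subgroup.m_closed[OF assms(1)] by simp
qed (simp add: subgroup.one_closed[OF assms(1)])

lemma (in group_hom) hom_finprod:
  assumes "comm_group G" "comm_group H" "finite I" "f \<in> I \<rightarrow> carrier G"
  shows "h (finprod G f I) = finprod H (h \<circ> f) I"
  using assms(3,4)
proof (induction I rule: finite_induct)
  case (insert k I)
  interpret G: comm_group G by fact
  interpret H: comm_group H by fact
  show ?case
    using insert by (simp add: Pi_def G.finprod_insert H.finprod_insert)
qed (simp add: comm_group.axioms(1)[OF assms(1)] comm_group.axioms(1)[OF assms(2)]
       comm_monoid.finprod_empty)

lemma (in comm_group) finprod_pow_choose_Suc:
  assumes y: "range y \<subseteq> carrier G" and "y (Suc N) = \<one>"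
  shows "(\<Otimes>k\<in>{..N}. y k [^] (Suc m choose Suc k))
    = y 0 \<otimes> (\<Otimes>k\<in>{..N}. y k [^] (m choose Suc k)) \<otimes> (\<Otimes>k\<in>{..N}. y (Suc k) [^] (m choose Suc k))"
proof -
  have [simp]: "y k \<in> carrier G" for k
    using y by auto
  define P where "P = (\<Otimes>k\<in>{..N}. y k [^] (m choose Suc k))"
  define Q where "Q = (\<Otimes>k\<in>{..N}. y (Suc k) [^] (m choose Suc k))"
  have PQ: "P \<in> carrier G" "Q \<in> carrier G"
    unfolding P_def Q_def by (auto simp: Pi_def)
  have "(\<Otimes>k\<in>{..N}. y k [^] (m choose k)) = (\<Otimes>k\<in>{..Suc N}. y k [^] (m choose k))"
    using \<open>y (Suc N) = \<one>\<close> by (simp add: Pi_def)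
  also have "\<dots> = Q \<otimes> y 0"
    unfolding Q_def by (subst finprod_Suc2) (auto simp: Pi_def)
  finally have shift: "(\<Otimes>k\<in>{..N}. y k [^] (m choose k)) = Q \<otimes> y 0" .
  have "(\<Otimes>k\<in>{..N}. y k [^] (Suc m choose Suc k))
      = (\<Otimes>k\<in>{..N}. y k [^] (m choose Suc k) \<otimes> y k [^] (m choose k))"
    by (intro finprod_cong) (auto simp: nat_pow_mult add.commute)
  also have "\<dots> = P \<otimes> (Q \<otimes> y 0)"
    unfolding P_def shift[symmetric] by (rule finprod_multf) (auto simp: Pi_def)
  also have "\<dots> = y 0 \<otimes> P \<otimes> Q"
    using PQ by (simp add: m_ac)
  finally show ?thesis
    unfolding P_def Q_def .
qed

lemma prime_power_dvd_choose:
  assumes "Factorial_Ring.prime (p::nat)" and "0 < k" and "k < p"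
  shows "p ^ i dvd (p ^ i choose k)"
proof -
  have "k * (p ^ i choose k) = p ^ i * (p ^ i - 1 choose (k - 1))"
    using times_binomial_minus1_eq[OF \<open>0 < k\<close>] .
  then have "p ^ i dvd (p ^ i choose k) * k"
    by (metis dvd_triv_left mult.commute)
  moreover have "\<not> p dvd k"
    using assms by (auto dest: dvd_imp_le)
  then have "coprime (p ^ i) k"
    using prime_imp_coprime[OF \<open>Factorial_Ring.prime p\<close>] by simp
  ultimately show ?thesis
    by (simp add: coprime_dvd_mult_left_iff)
qed

section \<open>Braces and the lambda action\<close>

locale left_brace =
  S: comm_group S + T: group T for S :: "'a monoid" and T :: "'a monoid" +
  assumes carrier_eq: "carrier T = carrier S"
    and brace_law: "\<And>a b c. a \<in> carrier S \<Longrightarrow> b \<in> carrier S \<Longrightarrow> c \<in> carrier S \<Longrightarrow>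
        (a \<otimes>\<^bsub>T\<^esub> (b \<otimes>\<^bsub>S\<^esub> c)) \<otimes>\<^bsub>S\<^esub> a = (a \<otimes>\<^bsub>T\<^esub> b) \<otimes>\<^bsub>S\<^esub> (a \<otimes>\<^bsub>T\<^esub> c)"

lemma brace_imp_left_brace: "brace S T \<Longrightarrow> left_brace S T"
  unfolding brace_def left_brace_def left_brace_axioms_def by blast

context left_brace
begin

abbreviation A :: "'a set" where "A \<equiv> carrier S"

abbreviation star :: "'a \<Rightarrow> 'a \<Rightarrow> 'a" (infixr "\<star>" 70)
  where "a \<star> x \<equiv> brace_star S T a x"

lemma circ_closed [simp]: "a \<in> A \<Longrightarrow> b \<in> A \<Longrightarrow> a \<otimes>\<^bsub>T\<^esub> b \<in> A"
  using T.m_closed carrier_eq by auto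

lemma circ_inv_closed [simp]: "a \<in> A \<Longrightarrow> inv\<^bsub>T\<^esub> a \<in> A"
  using T.inv_closed carrier_eq by auto

lemma circ_pow_closed [simp]: "a \<in> A \<Longrightarrow> a [^]\<^bsub>T\<^esub> (m::nat) \<in> A"
  using T.nat_pow_closed carrier_eq by auto

lemma circ_one_eq: "\<one>\<^bsub>T\<^esub> = \<one>\<^bsub>S\<^esub>"
proof -
  have one: "\<one>\<^bsub>T\<^esub> \<in> A"
    using carrier_eq by force
  have "(\<one>\<^bsub>T\<^esub> \<otimes>\<^bsub>T\<^esub> \<one>\<^bsub>S\<^esub>) \<otimes>\<^bsub>S\<^esub> \<one>\<^bsub>T\<^esub> = (\<one>\<^bsub>T\<^esub> \<otimes>\<^bsub>T\<^esub> \<one>\<^bsub>S\<^esub>) \<otimes>\<^bsub>S\<^esub> (\<one>\<^bsub>T\<^esub> \<otimes>\<^bsub>T\<^esub> \<one>\<^bsub>S\<^esub>)"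
    using brace_law[OF one S.one_closed S.one_closed] by simp
  then show ?thesis
    using one carrier_eq by (simp add: S.l_cancel_one')
qed

definition lambda :: "'a \<Rightarrow> 'a \<Rightarrow> 'a"
  where "lambda a x = (a \<otimes>\<^bsub>T\<^esub> x) \<otimes>\<^bsub>S\<^esub> inv\<^bsub>S\<^esub> a"

lemma lambda_closed [simp]: "a \<in> A \<Longrightarrow> x \<in> A \<Longrightarrow> lambda a x \<in> A"
  by (simp add: lambda_def)

lemma circ_eq_mult_lambda: "a \<in> A \<Longrightarrow> x \<in> A \<Longrightarrow> a \<otimes>\<^bsub>T\<^esub> x = a \<otimes>\<^bsub>S\<^esub> lambda a x"
  by (simp add: lambda_def S.m_ac)

lemma lambda_mult:
  assumes "a \<in> A" "x \<in> A" "y \<in> A"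
  shows "lambda a (x \<otimes>\<^bsub>S\<^esub> y) = lambda a x \<otimes>\<^bsub>S\<^esub> lambda a y"
proof -
  have "a \<otimes>\<^bsub>T\<^esub> (x \<otimes>\<^bsub>S\<^esub> y) = (a \<otimes>\<^bsub>T\<^esub> x) \<otimes>\<^bsub>S\<^esub> (a \<otimes>\<^bsub>T\<^esub> y) \<otimes>\<^bsub>S\<^esub> inv\<^bsub>S\<^esub> a"
    using brace_law[OF assms] assms by (simp add: S.inv_solve_right)
  then show ?thesis
    using assms by (simp add: lambda_def S.m_ac)
qed

lemma lambda_group_hom: "a \<in> A \<Longrightarrow> group_hom S S (lambda a)"
  unfolding group_hom_def group_hom_axioms_def hom_def
  using lambda_mult S.is_group by auto

lemma lambda_inv: "a \<in> A \<Longrightarrow> x \<in> A \<Longrightarrow> lambda a (inv\<^bsub>S\<^esub> x) = inv\<^bsub>S\<^esub> lambda a x"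
  using group_hom.hom_inv[OF lambda_group_hom] by blast

lemma lambda_nat_pow: "a \<in> A \<Longrightarrow> x \<in> A \<Longrightarrow> lambda a (x [^]\<^bsub>S\<^esub> (m::nat)) = lambda a x [^]\<^bsub>S\<^esub> m"
  using group_hom.hom_nat_pow[OF lambda_group_hom] by blast

lemma lambda_one_left: "x \<in> A \<Longrightarrow> lambda \<one>\<^bsub>S\<^esub> x = x"
  using T.l_one[of x] carrier_eq by (simp add: lambda_def circ_one_eq)

lemma lambda_circ:
  assumes "a \<in> A" "b \<in> A" "x \<in> A"
  shows "lambda a (lambda b x) = lambda (a \<otimes>\<^bsub>T\<^esub> b) x"
proof -
  have "lambda a (lambda b x) = lambda a (b \<otimes>\<^bsub>T\<^esub> x) \<otimes>\<^bsub>S\<^esub> inv\<^bsub>S\<^esub> lambda a b"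
    using assms by (simp add: lambda_def[of b] lambda_mult lambda_inv)
  also have "\<dots> = lambda (a \<otimes>\<^bsub>T\<^esub> b) x"
    using assms carrier_eq by (simp add: lambda_def T.m_assoc S.inv_mult_group S.m_ac)
  finally show ?thesis .
qed

lemma lambda_circ_inv_cancel:
  assumes "a \<in> A" "x \<in> A"
  shows "lambda (inv\<^bsub>T\<^esub> a) (lambda a x) = x" and "lambda a (lambda (inv\<^bsub>T\<^esub> a) x) = x"
  using assms carrier_eq T.l_inv[of a] T.r_inv[of a]
  by (simp_all add: lambda_circ lambda_one_left circ_one_eq)

lemma mult_eq_circ_lambda:
  "u \<in> A \<Longrightarrow> v \<in> A \<Longrightarrow> u \<otimes>\<^bsub>S\<^esub> v = u \<otimes>\<^bsub>T\<^esub> lambda (inv\<^bsub>T\<^esub> u) v"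
  by (simp add: circ_eq_mult_lambda lambda_circ_inv_cancel)

lemma circ_inv_eq_lambda:
  assumes "u \<in> A"
  shows "inv\<^bsub>T\<^esub> u = lambda (inv\<^bsub>T\<^esub> u) (inv\<^bsub>S\<^esub> u)"
proof -
  have inv: "u \<otimes>\<^bsub>T\<^esub> lambda (inv\<^bsub>T\<^esub> u) (inv\<^bsub>S\<^esub> u) = \<one>\<^bsub>T\<^esub>"
    using mult_eq_circ_lambda[of u "inv\<^bsub>S\<^esub> u"] assms by (simp add: circ_one_eq)
  have closed: "u \<in> carrier T" "lambda (inv\<^bsub>T\<^esub> u) (inv\<^bsub>S\<^esub> u) \<in> carrier T"
    using assms carrier_eq by simp_all
  show ?thesis
    using T.inv_equality[OF T.inv_comm[OF inv closed] closed] .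
qed

lemma subgroup_circ_if_lambda_closed:
  assumes I: "subgroup I S" and closed: "\<And>a x. a \<in> A \<Longrightarrow> x \<in> I \<Longrightarrow> lambda a x \<in> I"
  shows "subgroup I T"
proof (rule T.subgroupI)
  interpret I: subgroup I S by fact
  show "I \<subseteq> carrier T"
    using I.subset carrier_eq by simp
  show "I \<noteq> {}"
    using I.one_closed by blast
  show "inv\<^bsub>T\<^esub> u \<in> I" if "u \<in> I" for u
    using that closed[of "inv\<^bsub>T\<^esub> u" "inv\<^bsub>S\<^esub> u"] circ_inv_eq_lambda[of u] I.mem_carrier by auto
  show "u \<otimes>\<^bsub>T\<^esub> v \<in> I" if "u \<in> I" "v \<in> I" for u v
    using that closed[of u v] circ_eq_mult_lambda[of u v] I.mem_carrier by auto
qed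

lemma star_eq_lambda: "a \<star> x = lambda a x \<otimes>\<^bsub>S\<^esub> inv\<^bsub>S\<^esub> x"
  by (simp add: brace_star_def lambda_def)

lemma lambda_eq_mult_star: "a \<in> A \<Longrightarrow> x \<in> A \<Longrightarrow> lambda a x = x \<otimes>\<^bsub>S\<^esub> (a \<star> x)"
  by (simp add: star_eq_lambda S.m_ac)

lemma star_closed [simp]: "a \<in> A \<Longrightarrow> x \<in> A \<Longrightarrow> a \<star> x \<in> A"
  by (simp add: star_eq_lambda)

lemma star_group_hom: "a \<in> A \<Longrightarrow> group_hom S S ((\<star>) a)"
  unfolding group_hom_def group_hom_axioms_def hom_def
  by (auto simp: S.is_group star_eq_lambda lambda_mult S.inv_mult S.m_ac)

lemma star_one [simp]: "a \<in> A \<Longrightarrow> a \<star> \<one>\<^bsub>S\<^esub> = \<one>\<^bsub>S\<^esub>"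
  using group_hom.hom_one[OF star_group_hom] .

lemma star_inv: "a \<in> A \<Longrightarrow> x \<in> A \<Longrightarrow> a \<star> inv\<^bsub>S\<^esub> x = inv\<^bsub>S\<^esub> (a \<star> x)"
  using group_hom.hom_inv[OF star_group_hom] .

lemma star_mult: "a \<in> A \<Longrightarrow> x \<in> A \<Longrightarrow> y \<in> A \<Longrightarrow> a \<star> (x \<otimes>\<^bsub>S\<^esub> y) = (a \<star> x) \<otimes>\<^bsub>S\<^esub> (a \<star> y)"
  using group_hom.hom_mult[OF star_group_hom] .

lemma star_nat_pow: "a \<in> A \<Longrightarrow> x \<in> A \<Longrightarrow> a \<star> x [^]\<^bsub>S\<^esub> (m::nat) = (a \<star> x) [^]\<^bsub>S\<^esub> m"
  using group_hom.hom_nat_pow[OF star_group_hom] .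

lemma star_lambda:
  assumes "a \<in> A" "b \<in> A" "x \<in> A"
  shows "a \<star> lambda b x = lambda b ((inv\<^bsub>T\<^esub> b \<otimes>\<^bsub>T\<^esub> a \<otimes>\<^bsub>T\<^esub> b) \<star> x)"
proof -
  have "b \<otimes>\<^bsub>T\<^esub> (inv\<^bsub>T\<^esub> b \<otimes>\<^bsub>T\<^esub> a \<otimes>\<^bsub>T\<^esub> b) = a \<otimes>\<^bsub>T\<^esub> b"
    using assms carrier_eq by (simp add: T.m_assoc[symmetric])
  then show ?thesis
    using assms by (simp add: star_eq_lambda lambda_mult lambda_inv lambda_circ)
qed

section \<open>The star kernel series\<close>

fun star_kernel :: "nat \<Rightarrow> 'a set" where
  "star_kernel 0 = {\<one>\<^bsub>S\<^esub>}"
| "star_kernel (Suc j) = {x \<in> A. \<forall>a\<in>A. a \<star> x \<in> star_kernel j}"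

lemma subgroup_star_kernel: "subgroup (star_kernel j) S"
proof (induction j)
  case 0
  then show ?case
    using S.triv_subgroup by simp
next
  case (Suc j)
  interpret K: subgroup "star_kernel j" S by (rule Suc)
  show ?case
    by (rule S.subgroupI) (auto simp: star_inv star_mult)
qed

lemma star_kernel_subset: "star_kernel j \<subseteq> A"
  using subgroup.subset[OF subgroup_star_kernel] .

lemma star_kernel_Suc_mono: "star_kernel j \<subseteq> star_kernel (Suc j)"
  by (induction j) auto

lemma star_kernel_mono: "j \<le> k \<Longrightarrow> star_kernel j \<subseteq> star_kernel k"
  using lift_Suc_mono_le[of star_kernel, OF star_kernel_Suc_mono] .

lemma lambda_star_kernel: "b \<in> A \<Longrightarrow> x \<in> star_kernel j \<Longrightarrow> lambda b x \<in> star_kernel j"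
proof (induction j arbitrary: x b)
  case 0
  then show ?case
    using group_hom.hom_one[OF lambda_group_hom] by simp
next
  case (Suc j)
  then show ?case
    by (simp add: star_lambda)
qed

lemma lambda_image_star_kernel:
  assumes "b \<in> A"
  shows "lambda b ` star_kernel j = star_kernel j"
proof
  show "lambda b ` star_kernel j \<subseteq> star_kernel j"
    using lambda_star_kernel assms by auto
  show "star_kernel j \<subseteq> lambda b ` star_kernel j"
  proof
    fix x assume x: "x \<in> star_kernel j"
    then have "x \<in> A"
      using star_kernel_subset by blast
    then have "x = lambda b (lambda (inv\<^bsub>T\<^esub> b) x)" "lambda (inv\<^bsub>T\<^esub> b) x \<in> star_kernel j"
      using assms x lambda_circ_inv_cancel(2) lambda_star_kernel by auto
    then show "x \<in> lambda b ` star_kernel j"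
      by blast
  qed
qed

lemma star_iterate_star_kernel:
  assumes "a \<in> A" "x \<in> star_kernel m"
  shows "((\<star>) a ^^ k) x \<in> star_kernel (m - k)"
proof (induction k)
  case (Suc k)
  show ?case
  proof (cases "m - k")
    case 0
    then show ?thesis
      using Suc assms(1) group_hom.hom_one[OF star_group_hom] by simp
  next
    case (Suc r)
    then have "m - Suc k = r"
      by simp
    then show ?thesis
      using Suc \<open>((\<star>) a ^^ k) x \<in> star_kernel (m - k)\<close> assms(1) by simp
  qed
qed (use assms in simp)

lemma lambda_rcoset:
  assumes H: "subgroup H S" and "lambda g ` H = H" "g \<in> A" "x \<in> A"
  shows "lambda g ` (H #>\<^bsub>S\<^esub> x) = H #>\<^bsub>S\<^esub> lambda g x"
proof -
  have coset: "H #>\<^bsub>S\<^esub> y = (\<lambda>h. h \<otimes>\<^bsub>S\<^esub> y) ` H" for y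
    by (auto simp: r_coset_def)
  have "lambda g ` (H #>\<^bsub>S\<^esub> x) = (\<lambda>h. lambda g h \<otimes>\<^bsub>S\<^esub> lambda g x) ` H"
    unfolding coset image_image using assms subgroup.mem_carrier[OF H]
    by (intro image_cong) (auto simp: lambda_mult)
  also have "\<dots> = (\<lambda>h. h \<otimes>\<^bsub>S\<^esub> lambda g x) ` (lambda g ` H)"
    by (simp add: image_image)
  finally show ?thesis
    using assms(2) coset by simp
qed

lemma lambda_rcosets_action:
  assumes H: "subgroup H S" and stable: "\<And>g. g \<in> A \<Longrightarrow> lambda g ` H = H"
  shows "group_action T (rcosets\<^bsub>S\<^esub> H) (\<lambda>g. restrict ((`) (lambda g)) (rcosets\<^bsub>S\<^esub> H))"
proof (rule group_action_restrictI)
  have coset: "\<exists>x\<in>A. C = H #>\<^bsub>S\<^esub> x" if "C \<in> rcosets\<^bsub>S\<^esub> H" for C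
    using that unfolding RCOSETS_def by blast
  show "lambda g ` C \<in> rcosets\<^bsub>S\<^esub> H" if g: "g \<in> carrier T" and C: "C \<in> rcosets\<^bsub>S\<^esub> H" for g C
  proof -
    obtain x where "x \<in> A" "C = H #>\<^bsub>S\<^esub> x"
      using coset[OF C] by blast
    moreover have "g \<in> A"
      using g carrier_eq by simp
    ultimately show ?thesis
      using lambda_rcoset[OF H stable] unfolding RCOSETS_def by auto
  qed
  have subset: "C \<subseteq> A" if "C \<in> rcosets\<^bsub>S\<^esub> H" for C
    using that coset S.r_coset_subset_G[OF subgroup.subset[OF H]] by blast
  show "lambda \<one>\<^bsub>T\<^esub> ` C = C" if "C \<in> rcosets\<^bsub>S\<^esub> H" for C
  proof -
    have "lambda \<one>\<^bsub>T\<^esub> ` C = id ` C"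
      using subset[OF that] by (intro image_cong) (auto simp: circ_one_eq lambda_one_left)
    then show ?thesis
      by simp
  qed
  show "lambda (g \<otimes>\<^bsub>T\<^esub> h) ` C = lambda g ` lambda h ` C"
    if "g \<in> carrier T" "h \<in> carrier T" "C \<in> rcosets\<^bsub>S\<^esub> H" for g h C
    unfolding image_image using that subset[OF that(3)] carrier_eq
    by (intro image_cong) (auto simp: lambda_circ)
qed (rule T.is_group)

section \<open>Powers with respect to the circle operation\<close>

lemma star_iterate_closed [simp]: "a \<in> A \<Longrightarrow> ((\<star>) a ^^ k) a \<in> A"
  by (induction k) auto

lemma circ_pow_expansion:
  assumes a: "a \<in> A" and nilpotent: "((\<star>) a ^^ Suc N) a = \<one>\<^bsub>S\<^esub>"
  shows "a [^]\<^bsub>T\<^esub> m = finprod S (\<lambda>k. ((\<star>) a ^^ k) a [^]\<^bsub>S\<^esub> (m choose Suc k)) {..N}"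
proof (induction m)
  case 0
  then show ?case
    by (simp add: circ_one_eq)
next
  case (Suc m)
  let ?y = "\<lambda>k. ((\<star>) a ^^ k) a"
  have y_closed: "range ?y \<subseteq> A"
    using a by auto
  have lambda_term: "lambda a (?y k [^]\<^bsub>S\<^esub> c) = ?y k [^]\<^bsub>S\<^esub> c \<otimes>\<^bsub>S\<^esub> ?y (Suc k) [^]\<^bsub>S\<^esub> c" for k and c :: nat
    using a by (simp add: lambda_nat_pow lambda_eq_mult_star star_nat_pow S.nat_pow_distrib)
  have "a [^]\<^bsub>T\<^esub> Suc m = a \<otimes>\<^bsub>T\<^esub> a [^]\<^bsub>T\<^esub> m"
    using a carrier_eq by (intro T.nat_pow_Suc2) simp
  also have "\<dots> = a \<otimes>\<^bsub>S\<^esub> lambda a (a [^]\<^bsub>T\<^esub> m)"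
    using a by (simp add: circ_eq_mult_lambda)
  also have "lambda a (a [^]\<^bsub>T\<^esub> m) = finprod S (\<lambda>k. lambda a (?y k [^]\<^bsub>S\<^esub> (m choose Suc k))) {..N}"
    unfolding Suc.IH using a
    by (simp add: group_hom.hom_finprod[OF lambda_group_hom S.comm_group_axioms S.comm_group_axioms] Pi_def comp_def)
  also have "\<dots> = finprod S (\<lambda>k. ?y k [^]\<^bsub>S\<^esub> (m choose Suc k)) {..N}
      \<otimes>\<^bsub>S\<^esub> finprod S (\<lambda>k. ?y (Suc k) [^]\<^bsub>S\<^esub> (m choose Suc k)) {..N}"
    unfolding lambda_term using a by (simp add: Pi_def)
  finally show ?case
    using S.finprod_pow_choose_Suc[OF y_closed nilpotent] a by (simp add: Pi_def S.m_assoc)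
qed

lemma circ_pow_prime_power:
  assumes p: "Factorial_Ring.prime p" and a: "a \<in> star_kernel (Suc j)" and "Suc j < p"
  obtains f where "f \<in> star_kernel j" "a [^]\<^bsub>T\<^esub> (p ^ i) = a [^]\<^bsub>S\<^esub> (p ^ i) \<otimes>\<^bsub>S\<^esub> f [^]\<^bsub>S\<^esub> (p ^ i)"
proof -
  let ?q = "p ^ i"
  let ?y = "\<lambda>k. ((\<star>) a ^^ k) a"
  define c where "c k = (?q choose Suc k) div ?q" for k
  have "a \<in> A"
    using a star_kernel_subset by blast
  have y_kernel: "?y k \<in> star_kernel (Suc j - k)" for k
    using star_iterate_star_kernel[OF \<open>a \<in> A\<close> a] .
  then have "?y (Suc j) = \<one>\<^bsub>S\<^esub>"
    by (metis diff_self_eq_0 singletonD star_kernel.simps(1))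
  then have "a [^]\<^bsub>T\<^esub> ?q = finprod S (\<lambda>k. ?y k [^]\<^bsub>S\<^esub> (?q choose Suc k)) {..j}"
    using circ_pow_expansion[OF \<open>a \<in> A\<close>] by blast
  also have "\<dots> = a [^]\<^bsub>S\<^esub> ?q \<otimes>\<^bsub>S\<^esub> finprod S (\<lambda>k. ?y k [^]\<^bsub>S\<^esub> (?q choose Suc k)) {1..j}"
    using S.finprod_0'[symmetric, of "\<lambda>k. ?y k [^]\<^bsub>S\<^esub> (?q choose Suc k)" j] \<open>a \<in> A\<close>
    by (simp add: Pi_def)
  also have "finprod S (\<lambda>k. ?y k [^]\<^bsub>S\<^esub> (?q choose Suc k)) {1..j}
      = finprod S (\<lambda>k. (?y k [^]\<^bsub>S\<^esub> c k) [^]\<^bsub>S\<^esub> ?q) {1..j}"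
  proof (rule S.finprod_cong')
    fix k assume "k \<in> {1..j}"
    then have "?q dvd (?q choose Suc k)"
      using prime_power_dvd_choose[OF p] \<open>Suc j < p\<close> by simp
    then show "?y k [^]\<^bsub>S\<^esub> (?q choose Suc k) = (?y k [^]\<^bsub>S\<^esub> c k) [^]\<^bsub>S\<^esub> ?q"
      using \<open>a \<in> A\<close> by (simp add: S.nat_pow_pow c_def mult.commute)
  qed (use \<open>a \<in> A\<close> in \<open>auto simp: Pi_def\<close>)
  also have "\<dots> = finprod S (\<lambda>k. ?y k [^]\<^bsub>S\<^esub> c k) {1..j} [^]\<^bsub>S\<^esub> ?q"
    using group_hom.hom_finprod[OF S.nat_pow_group_hom S.comm_group_axioms S.comm_group_axioms,
        of "{1..j}" "\<lambda>k. ?y k [^]\<^bsub>S\<^esub> c k" ?q] \<open>a \<in> A\<close>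
    by (simp add: comp_def)
  finally have "a [^]\<^bsub>T\<^esub> ?q = a [^]\<^bsub>S\<^esub> ?q \<otimes>\<^bsub>S\<^esub> finprod S (\<lambda>k. ?y k [^]\<^bsub>S\<^esub> c k) {1..j} [^]\<^bsub>S\<^esub> ?q" .
  moreover have "finprod S (\<lambda>k. ?y k [^]\<^bsub>S\<^esub> c k) {1..j} \<in> star_kernel j"
  proof (rule S.finprod_subgroup_closed[OF subgroup_star_kernel])
    fix k assume "k \<in> {1..j}"
    then have "Suc j - k \<le> j"
      by auto
    then have "?y k \<in> star_kernel j"
      using y_kernel star_kernel_mono by blast
    then show "?y k [^]\<^bsub>S\<^esub> c k \<in> star_kernel j"
      using S.subgroup_nat_pow_closed[OF subgroup_star_kernel] by blast
  qed simp
  ultimately show ?thesis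
    using that by blast
qed

definition multiples :: "nat \<Rightarrow> 'a set"
  where "multiples q = (\<lambda>x. x [^]\<^bsub>S\<^esub> q) ` A"

lemma subgroup_multiples: "subgroup (multiples q) S"
  unfolding multiples_def using S.nat_pow_image_subgroup[OF S.subgroup_self] .

lemma lambda_multiples: "a \<in> A \<Longrightarrow> x \<in> multiples q \<Longrightarrow> lambda a x \<in> multiples q"
  unfolding multiples_def by (auto simp: lambda_nat_pow)

lemma star_multiples: "a \<in> A \<Longrightarrow> x \<in> multiples q \<Longrightarrow> a \<star> x \<in> multiples q"
  unfolding multiples_def by (auto simp: star_nat_pow)

lemma subgroup_circ_multiples: "subgroup (multiples q) T"
  using subgroup_circ_if_lambda_closed[OF subgroup_multiples lambda_multiples] .

end

locale prime_power_brace = left_brace +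
  fixes p n :: nat
  assumes prime: "Factorial_Ring.prime p"
    and card_carrier: "card (carrier S) = p ^ n"
begin

lemma finite_carrier: "finite A"
  by (rule card_ge_0_finite) (simp add: card_carrier prime_gt_0_nat[OF prime])

lemma order_circ: "order T = p ^ n"
  using card_carrier carrier_eq by (simp add: order_def)

text \<open>The p-group (A,\<circ>) acts on the cosets of H and fixes the coset H, so it fixes another coset
  H + x; that means \<open>\<lambda>_a(x) - x = a * x \<in> H\<close> for all a.\<close>
lemma exists_nonmember_star_into_stable_subgroup:
  assumes H: "subgroup H S" and stable: "\<And>g. g \<in> A \<Longrightarrow> lambda g ` H = H" and "H \<noteq> A"
  shows "\<exists>x\<in>A. x \<notin> H \<and> (\<forall>a\<in>A. a \<star> x \<in> H)"
proof -
  interpret H: subgroup H S by fact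
  let ?E = "rcosets\<^bsub>S\<^esub> H"
  interpret group_action T ?E "\<lambda>g. restrict ((`) (lambda g)) ?E"
    by (rule lambda_rcosets_action[OF H stable])
  have "?E \<subseteq> Pow A"
    using S.rcosets_part_G[OF H] by blast
  then have finite_E: "finite ?E"
    using finite_carrier finite_subset by blast
  have lagrange: "card ?E * card H = p ^ n"
    using S.lagrange[OF H] card_carrier by (simp add: order_def)
  have "H \<subset> A"
    using \<open>H \<noteq> A\<close> H.subset by blast
  then have "card H < p ^ n"
    using psubset_card_mono[OF finite_carrier] card_carrier by simp
  then have "card ?E \<noteq> 1"
    using lagrange by auto
  moreover have "card ?E dvd p ^ n"
    using lagrange by (metis dvd_triv_left)
  then obtain k where "card ?E = p ^ k"
    using divides_primepow_nat[OF prime] by blast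
  ultimately have p_dvd: "p dvd card ?E"
    by (cases k) auto
  have "H = H #>\<^bsub>S\<^esub> \<one>\<^bsub>S\<^esub>"
    using H.subset by simp
  then have H_coset: "H \<in> ?E"
    unfolding RCOSETS_def by blast
  have H_fixed: "\<forall>g\<in>carrier T. restrict ((`) (lambda g)) ?E H = H"
    using H_coset stable carrier_eq by simp
  obtain C where C: "C \<in> ?E" "C \<noteq> H" "\<forall>g\<in>carrier T. restrict ((`) (lambda g)) ?E C = C"
    using fixed_point_prime_power_order[OF finite_E prime order_circ p_dvd H_coset H_fixed] by blast
  obtain x where x: "x \<in> A" "C = H #>\<^bsub>S\<^esub> x"
    using C(1) unfolding RCOSETS_def by blast
  have "a \<star> x \<in> H" if a: "a \<in> A" for a
  proof -
    have "lambda a ` C = C"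
      using C(1,3) a carrier_eq by simp
    then have "H #>\<^bsub>S\<^esub> lambda a x = H #>\<^bsub>S\<^esub> x"
      using a x lambda_rcoset[OF H stable] by simp
    moreover have "lambda a x \<in> H #>\<^bsub>S\<^esub> lambda a x"
      using S.rcos_self[OF _ H] a x by simp
    ultimately have "lambda a x \<in> H #>\<^bsub>S\<^esub> x"
      by simp
    then show ?thesis
      using H.rcos_module_imp[OF S.is_group x(1)] by (simp add: star_eq_lambda)
  qed
  moreover have "x \<notin> H"
    using H.rcos_const[OF S.is_group] x C(2) by blast
  ultimately show ?thesis
    using x(1) by blast
qed

lemma star_kernel_card_lower_bound: "star_kernel j \<noteq> A \<Longrightarrow> p ^ j \<le> card (star_kernel j)"
proof (induction j)
  case (Suc j)
  have "star_kernel j \<noteq> A"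
    using Suc.prems star_kernel_Suc_mono star_kernel_subset by blast
  then obtain x where "x \<in> star_kernel (Suc j)" "x \<notin> star_kernel j"
    using exists_nonmember_star_into_stable_subgroup[OF subgroup_star_kernel lambda_image_star_kernel] by auto
  then have "star_kernel j \<subset> star_kernel (Suc j)"
    using star_kernel_Suc_mono by blast
  then have "card (star_kernel j) < card (star_kernel (Suc j))"
    using psubset_card_mono finite_subset[OF star_kernel_subset finite_carrier] by blast
  moreover obtain a b where ab: "card (star_kernel j) = p ^ a" "card (star_kernel (Suc j)) = p ^ b"
    using S.card_subgroup_prime_power[OF prime _ subgroup_star_kernel] card_carrier
    by (metis order_def)
  ultimately have "a < b"
    using prime_gt_1_nat[OF prime] by simp
  then have "p * card (star_kernel j) \<le> card (star_kernel (Suc j))"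
    using ab prime_gt_1_nat[OF prime] power_increasing[of "Suc a" b p] by simp
  moreover have "p ^ Suc j \<le> p * card (star_kernel j)"
    using Suc.IH \<open>star_kernel j \<noteq> A\<close> by simp
  ultimately show ?case
    by (metis order_trans power_Suc)
qed simp

lemma star_kernel_eq_carrier: "star_kernel n = A"
proof (rule ccontr)
  assume "star_kernel n \<noteq> A"
  then have "card A \<le> card (star_kernel n)"
    using star_kernel_card_lower_bound card_carrier by simp
  then show False
    using card_seteq[OF finite_carrier star_kernel_subset] \<open>star_kernel n \<noteq> A\<close> by blast
qed


lemma generate_circ_powers_subset_multiples:
  assumes "n + 1 < p"
  shows "generate T ((\<lambda>a. a [^]\<^bsub>T\<^esub> (p ^ i)) ` A) \<subseteq> multiples (p ^ i)"
proof (rule T.generate_subgroup_incl[OF _ subgroup_circ_multiples])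
  show "(\<lambda>a. a [^]\<^bsub>T\<^esub> (p ^ i)) ` A \<subseteq> multiples (p ^ i)"
  proof
    fix u assume "u \<in> (\<lambda>a. a [^]\<^bsub>T\<^esub> (p ^ i)) ` A"
    then obtain a where a: "a \<in> A" "u = a [^]\<^bsub>T\<^esub> (p ^ i)"
      by blast
    then have "a \<in> star_kernel (Suc n)"
      using star_kernel_eq_carrier star_kernel_Suc_mono by blast
    moreover have "Suc n < p"
      using assms by simp
    ultimately obtain f where f: "f \<in> star_kernel n" "u = a [^]\<^bsub>S\<^esub> (p ^ i) \<otimes>\<^bsub>S\<^esub> f [^]\<^bsub>S\<^esub> (p ^ i)"
      using circ_pow_prime_power[OF prime] a(2) by blast
    then have "a [^]\<^bsub>S\<^esub> (p ^ i) \<in> multiples (p ^ i)" "f [^]\<^bsub>S\<^esub> (p ^ i) \<in> multiples (p ^ i)"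
      using a(1) star_kernel_subset unfolding multiples_def by blast+
    then show "u \<in> multiples (p ^ i)"
      using f(2) subgroup.m_closed[OF subgroup_multiples] by simp
  qed
qed

lemma multiples_subset_generate_circ_powers:
  assumes "n + 1 < p"
  shows "multiples (p ^ i) \<subseteq> generate T ((\<lambda>a. a [^]\<^bsub>T\<^esub> (p ^ i)) ` A)"
proof -
  let ?q = "p ^ i"
  let ?B = "generate T ((\<lambda>a. a [^]\<^bsub>T\<^esub> ?q) ` A)"
  txt \<open>For \<open>a \<in> F_(j+1)\<close> write \<open>p^i a = u - p^i f\<close> with \<open>u = a^\<circ>(p^i)\<close> and
    \<open>f \<in> F_j\<close>; as a \<circ>-product this is \<open>u \<circ> p^i v\<close> with \<open>v = \<lambda>_(u\<inverse>)(-f) \<in> F_j\<close>.\<close>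
  have "(\<lambda>x. x [^]\<^bsub>S\<^esub> ?q) ` star_kernel j \<subseteq> ?B" if "j \<le> n" for j
    using that
  proof (induction j)
    case 0
    then show ?case
      using generate.one[of T] by (simp add: circ_one_eq)
  next
    case (Suc j)
    show ?case
    proof
      fix y assume "y \<in> (\<lambda>x. x [^]\<^bsub>S\<^esub> ?q) ` star_kernel (Suc j)"
      then obtain a where a: "a \<in> star_kernel (Suc j)" "y = a [^]\<^bsub>S\<^esub> ?q"
        by blast
      have "a \<in> A"
        using a(1) star_kernel_subset by blast
      have "Suc j < p"
        using Suc.prems assms by simp
      then obtain f where f: "f \<in> star_kernel j" "a [^]\<^bsub>T\<^esub> ?q = a [^]\<^bsub>S\<^esub> ?q \<otimes>\<^bsub>S\<^esub> f [^]\<^bsub>S\<^esub> ?q"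
        using circ_pow_prime_power[OF prime a(1)] by blast
      have "f \<in> A"
        using f(1) star_kernel_subset by blast
      let ?u = "a [^]\<^bsub>T\<^esub> ?q"
      let ?v = "lambda (inv\<^bsub>T\<^esub> ?u) (inv\<^bsub>S\<^esub> f)"
      have "y = ?u \<otimes>\<^bsub>S\<^esub> inv\<^bsub>S\<^esub> (f [^]\<^bsub>S\<^esub> ?q)"
        using f(2) a(2) \<open>a \<in> A\<close> \<open>f \<in> A\<close> by (simp add: S.m_assoc)
      also have "\<dots> = ?u \<otimes>\<^bsub>T\<^esub> lambda (inv\<^bsub>T\<^esub> ?u) (inv\<^bsub>S\<^esub> (f [^]\<^bsub>S\<^esub> ?q))"
        using \<open>a \<in> A\<close> \<open>f \<in> A\<close> by (simp add: mult_eq_circ_lambda)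
      also have "\<dots> = ?u \<otimes>\<^bsub>T\<^esub> ?v [^]\<^bsub>S\<^esub> ?q"
        using \<open>a \<in> A\<close> \<open>f \<in> A\<close> by (simp add: lambda_nat_pow flip: S.nat_pow_inv)
      finally have y: "y = ?u \<otimes>\<^bsub>T\<^esub> ?v [^]\<^bsub>S\<^esub> ?q" .
      have "?v \<in> star_kernel j"
        using f(1) \<open>a \<in> A\<close> subgroup.m_inv_closed[OF subgroup_star_kernel] lambda_star_kernel by simp
      moreover have "(\<lambda>x. x [^]\<^bsub>S\<^esub> ?q) ` star_kernel j \<subseteq> ?B"
        using Suc by simp
      ultimately have "?v [^]\<^bsub>S\<^esub> ?q \<in> ?B"
        by blast
      moreover have "?u \<in> ?B"
        using \<open>a \<in> A\<close> by (blast intro: generate.incl)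
      ultimately show "y \<in> ?B"
        unfolding y by (rule generate.eng[rotated])
    qed
  qed
  from this[of n] show ?thesis
    unfolding multiples_def star_kernel_eq_carrier by simp
qed

theorem brace_ideal_multiples_prime_power:
  assumes "n + 1 < p"
  shows "brace_ideal S T (multiples (p ^ i))"
    and "generate T ((\<lambda>a. a [^]\<^bsub>T\<^esub> (p ^ i)) ` A) = multiples (p ^ i)"
proof -
  show generate_eq: "generate T ((\<lambda>a. a [^]\<^bsub>T\<^esub> (p ^ i)) ` A) = multiples (p ^ i)"
    using generate_circ_powers_subset_multiples[OF assms] multiples_subset_generate_circ_powers[OF assms]
    by (rule equalityI)
  have "multiples (p ^ i) \<lhd> T"
    using T.normal_generate_nat_pow_image[of "p ^ i"] generate_eq carrier_eq by simp
  then show "brace_ideal S T (multiples (p ^ i))"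
    unfolding brace_ideal_def using subgroup_multiples star_multiples by blast
qed

end

theorem proposition13:
  fixes S T :: "'a monoid" and p n i :: nat
  assumes "brace S T"
    and "finite (carrier S)"
    and "card (carrier S) = p ^ n"
    and "Factorial_Ring.prime p"
    and "p > n + 1"
  shows "brace_ideal S T {a [^]\<^bsub>S\<^esub> (p ^ i) | a. a \<in> carrier S}
    \<and> generate T {a [^]\<^bsub>T\<^esub> (p ^ i) | a. a \<in> carrier S}
        = {a [^]\<^bsub>S\<^esub> (p ^ i) | a. a \<in> carrier S}"
proof -
  txt \<open>Finiteness of the carrier is implied by its cardinality being \<open>p^n > 0\<close>.\<close>
  interpret prime_power_brace S T p n
    using brace_imp_left_brace[OF assms(1)] assms(3,4)
    by (simp add: prime_power_brace_def prime_power_brace_axioms_def)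
  have "{a [^]\<^bsub>S\<^esub> (p ^ i) | a. a \<in> carrier S} = multiples (p ^ i)"
    unfolding multiples_def by blast
  moreover have "{a [^]\<^bsub>T\<^esub> (p ^ i) | a. a \<in> carrier S} = (\<lambda>a. a [^]\<^bsub>T\<^esub> (p ^ i)) ` A"
    by blast
  ultimately show ?thesis
    using brace_ideal_multiples_prime_power[OF assms(5)] by simp
qed

end
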